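(* Let $a,b>0$, $\alpha\in\mathbb R$, and $\rho_1,\rho_2\ge0$ with $\rho_1>0$ or $\rho_2>0$. Let $X\sim\mathrm{Binom}(m_1,\frac{a\log n}{n})$ and $R\sim\mathrm{Binom}(m_2,\frac{b\log n}{n})$ be independent, where $m_1=\rho_1n+o(n)$ and $m_2=\rho_2n+o(n)$, and let $k$ be an integer with $k=\alpha\log n+o(\log n)$. If $\alpha\le a\rho_1-b\rho_2$ (and, when $\rho_2=0$, $\alpha>0$), then $$\mathbb P\{X-R\le k\}=n^{-g(\rho_1,\rho_2,a,b,\alpha)+o(1)},$$ where, with $\gamma=\sqrt{\alpha^2+4\rho_1\rho_2ab}$, $$g(\rho_1,\rho_2,a,b,\alpha)=\begin{cases}a\rho_1+b\rho_2-\gamma-\frac{\alpha}{2}\log\frac{(\gamma-\alpha)a\rho_1}{(\gamma+\alpha)b\rho_2},&\rho_1,\rho_2>0,\\ \rho_2b+\alpha\log\frac{-e\rho_2b}{\alpha},&\rho_1=0,\rho_2>0,\\ \rho_1a-\alpha\log\frac{e\rho_1a}{\alpha},&\rho_1>0,\rho_2=0.\end{cases}$$ Furthermore, for any nonnegative integers $m_1,m_2$ (not both zero) and integer $k$ with $k\le(m_1a-m_2b)\log n/n$ (and $k>0$ if $m_2=0$), $$\mathbb P\{X-R\le k\}\le n^{-g(m_1/n,\,m_2/n,\,a,\,b,\,k/\log n)}.$$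
   Context: $\mathrm{Binom}(m,p)$ denotes the binomial distribution; logarithms are natural. *)

theory Defs
  imports "HOL-Probability.Probability" "HOL-Library.Landau_Symbols"
begin

definition diff_prob :: "real \<Rightarrow> real \<Rightarrow> nat \<Rightarrow> nat \<Rightarrow> nat \<Rightarrow> int \<Rightarrow> real" where
  "diff_prob a b n m1 m2 k =
     measure_pmf.prob
       (pair_pmf (binomial_pmf m1 (a * ln (real n) / real n)) (binomial_pmf m2 (b * ln (real n) / real n)))
       {(x, r). int x - int r \<le> k}"

definition g_rate :: "real \<Rightarrow> real \<Rightarrow> real \<Rightarrow> real \<Rightarrow> real \<Rightarrow> real" where
  "g_rate \<rho>1 \<rho>2 a b \<alpha> =
     (let \<gamma> = sqrt (\<alpha>\<^sup>2 + 4 * \<rho>1 * \<rho>2 * a * b) in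
      if \<rho>1 > 0 \<and> \<rho>2 > 0 then
        a * \<rho>1 + b * \<rho>2 - \<gamma> - \<alpha> / 2 * ln (((\<gamma> - \<alpha>) * a * \<rho>1) / ((\<gamma> + \<alpha>) * b * \<rho>2))
      else if \<rho>1 = 0 \<and> \<rho>2 > 0 then
        \<rho>2 * b + \<alpha> * ln (- exp 1 * \<rho>2 * b / \<alpha>)
      else
        \<rho>1 * a - \<alpha> * ln (exp 1 * \<rho>1 * a / \<alpha>))"

end

theory Submission
  imports Defs "HOL-Real_Asymp.Real_Asymp"
begin

text \<open>
  Upper bound: for every \<open>\<theta> \<ge> 0\<close> the exponential Markov inequality gives
  \<open>P{X - R \<le> k} \<le> E exp (\<theta> (k - X + R)) \<le> exp (\<theta> k + m1 p1 (exp (-\<theta>) - 1) + m2 p2 (exp \<theta> - 1))\<close>,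
  that is, \<open>n\<close> to the power \<open>\<theta> \<alpha> + a \<rho>1 (exp (-\<theta>) - 1) + b \<rho>2 (exp \<theta> - 1) + o(1)\<close>.
  With \<open>c1 = (\<gamma> + \<alpha>) / 2\<close>, \<open>c2 = (\<gamma> - \<alpha>) / 2\<close> and the tilt \<open>y = exp \<theta>\<close> determined by
  \<open>a \<rho>1 = c1 y\<close> and \<open>b \<rho>2 y = c2\<close>, this exponent equals \<open>-g\<close>; the hypothesis
  \<open>\<alpha> \<le> a \<rho>1 - b \<rho>2\<close> is exactly what makes \<open>y \<ge> 1\<close>, i.e. \<open>\<theta> \<ge> 0\<close>.

  Lower bound: \<open>P{X - R \<le> k} \<ge> P{X = x} P{R = r}\<close> for integers \<open>x \<approx> c1 log n\<close> and
  \<open>r \<approx> c2 log n\<close> with \<open>x - r \<le> k\<close>. The point probability \<open>P{Bin(\<rho> n, a log n / n) = c log n}\<close>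
  is \<open>n\<close> to the power \<open>c ln (a \<rho> / c) + c - a \<rho> + o(1)\<close>, and for these \<open>c1, c2\<close> the two
  exponents again add up to \<open>-g\<close>.
\<close>

section \<open>The Chernoff bound for a difference of binomials\<close>

lemma binomial_pgf_le_exp:
  fixes p t :: real
  assumes "0 \<le> p" "p \<le> 1" "0 \<le> t"
  shows "(\<Sum>x\<le>m. pmf (binomial_pmf m p) x * t ^ x) \<le> exp (m * p * (t - 1))"
proof -
  have "(\<Sum>x\<le>m. pmf (binomial_pmf m p) x * t ^ x)
          = (\<Sum>x\<le>m. real (m choose x) * (p * t) ^ x * (1 - p) ^ (m - x))"
    using assms by (intro sum.cong) (auto simp: pmf_binomial power_mult_distrib)
  also have "\<dots> = (p * t + (1 - p)) ^ m"
    by (subst binomial_ring) simp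
  also have "\<dots> = (1 + p * (t - 1)) ^ m"
    by (simp add: algebra_simps)
  also have "\<dots> \<le> exp (p * (t - 1)) ^ m"
  proof (rule power_mono)
    have "0 \<le> (1 - p) + p * t"
      using assms by simp
    then show "0 \<le> 1 + p * (t - 1)"
      by (simp add: algebra_simps)
  qed (rule exp_ge_add_one_self)
  also have "\<dots> = exp (m * p * (t - 1))"
    by (simp add: exp_of_nat_mult[symmetric] mult.assoc)
  finally show ?thesis .
qed

lemma prob_le_sum_pmf_mult:
  fixes M :: "'a pmf" and w :: "'a \<Rightarrow> real"
  assumes "finite S" "set_pmf M \<subseteq> S"
    and "\<And>z. z \<in> A \<inter> S \<Longrightarrow> 1 \<le> w z" "\<And>z. z \<in> S \<Longrightarrow> 0 \<le> w z"
  shows "measure_pmf.prob M A \<le> (\<Sum>z\<in>S. pmf M z * w z)"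
proof -
  have "measure_pmf.prob M A \<le> measure_pmf.prob M (A \<inter> S)"
    using assms(2) by (subst measure_Int_set_pmf[symmetric]) (auto intro: measure_pmf.finite_measure_mono)
  also have "\<dots> = (\<Sum>z\<in>A \<inter> S. pmf M z)"
    using assms(1) by (simp add: measure_measure_pmf_finite)
  also have "\<dots> \<le> (\<Sum>z\<in>A \<inter> S. pmf M z * w z)"
    using assms(3) by (intro sum_mono) (simp add: mult_le_cancel_left1)
  also have "\<dots> \<le> (\<Sum>z\<in>S. pmf M z * w z)"
    using assms(1,4) by (intro sum_mono2) auto
  finally show ?thesis .
qed

definition chernoff_exponent :: "real \<Rightarrow> real \<Rightarrow> real \<Rightarrow> real \<Rightarrow> real" where
  "chernoff_exponent \<mu>1 \<mu>2 \<alpha> \<theta> = \<theta> * \<alpha> + \<mu>1 * (exp (- \<theta>) - 1) + \<mu>2 * (exp \<theta> - 1)"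

lemma prob_diff_binomials_le_exp:
  fixes p1 p2 \<theta> :: real and k :: int
  assumes "0 \<le> p1" "p1 \<le> 1" "0 \<le> p2" "p2 \<le> 1" "0 \<le> \<theta>"
  shows "measure_pmf.prob (pair_pmf (binomial_pmf m1 p1) (binomial_pmf m2 p2)) {(x, r). int x - int r \<le> k}
           \<le> exp (chernoff_exponent (m1 * p1) (m2 * p2) k \<theta>)"
proof -
  define M where "M = pair_pmf (binomial_pmf m1 p1) (binomial_pmf m2 p2)"
  define w where "w = (\<lambda>(x :: nat, r :: nat). exp (\<theta> * (k - real x + real r)))"
  have "measure_pmf.prob M {(x, r). int x - int r \<le> k} \<le> (\<Sum>z\<in>{..m1} \<times> {..m2}. pmf M z * w z)"
    using assms by (intro prob_le_sum_pmf_mult) (auto simp: M_def w_def set_pmf_binomial_eq)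
  also have "\<dots> = (\<Sum>x\<le>m1. \<Sum>r\<le>m2. exp (\<theta> * k) * (pmf (binomial_pmf m1 p1) x * exp (- \<theta>) ^ x)
                    * (pmf (binomial_pmf m2 p2) r * exp \<theta> ^ r))"
  proof (unfold sum.cartesian_product', intro sum.cong refl)
    fix x r :: nat
    have "exp (\<theta> * (k - real x + real r)) = exp (\<theta> * k) * exp (- \<theta>) ^ x * exp \<theta> ^ r"
      by (simp add: exp_of_nat_mult[symmetric] exp_add[symmetric] algebra_simps)
    then show "pmf M (x, r) * w (x, r) = exp (\<theta> * k) * (pmf (binomial_pmf m1 p1) x * exp (- \<theta>) ^ x)
                 * (pmf (binomial_pmf m2 p2) r * exp \<theta> ^ r)"
      by (simp add: M_def w_def pmf_pair)
  qed
  also have "\<dots> = exp (\<theta> * k) * ((\<Sum>x\<le>m1. pmf (binomial_pmf m1 p1) x * exp (- \<theta>) ^ x)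
                    * (\<Sum>r\<le>m2. pmf (binomial_pmf m2 p2) r * exp \<theta> ^ r))"
    by (subst sum_product) (simp add: sum_distrib_left mult.assoc)
  also have "\<dots> \<le> exp (\<theta> * k) * (exp (m1 * p1 * (exp (- \<theta>) - 1)) * exp (m2 * p2 * (exp \<theta> - 1)))"
    using assms by (intro mult_left_mono mult_mono binomial_pgf_le_exp) (auto intro: sum_nonneg)
  also have "\<dots> = exp (chernoff_exponent (m1 * p1) (m2 * p2) k \<theta>)"
    by (simp add: chernoff_exponent_def exp_add[symmetric] algebra_simps)
  finally show ?thesis
    by (simp add: M_def)
qed

lemma diff_prob_le_powr_chernoff_exponent:
  fixes a b \<theta> :: real
  assumes "2 \<le> n" "0 \<le> a" "0 \<le> b" "a * ln n / n \<le> 1" "b * ln n / n \<le> 1" "0 \<le> \<theta>"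
  shows "diff_prob a b n m1 m2 k
           \<le> real n powr chernoff_exponent (a * (m1 / n)) (b * (m2 / n)) (k / ln n) \<theta>"
proof -
  have "0 < ln (real n)"
    using assms by simp
  have "diff_prob a b n m1 m2 k \<le> exp (chernoff_exponent (m1 * (a * ln n / n)) (m2 * (b * ln n / n)) k \<theta>)"
    unfolding diff_prob_def using assms by (intro prob_diff_binomials_le_exp) auto
  also have "chernoff_exponent (m1 * (a * ln n / n)) (m2 * (b * ln n / n)) k \<theta>
               = ln n * chernoff_exponent (a * (m1 / n)) (b * (m2 / n)) (k / ln n) \<theta>"
    using \<open>0 < ln (real n)\<close> by (simp add: chernoff_exponent_def field_simps)
  also have "exp \<dots> = real n powr chernoff_exponent (a * (m1 / n)) (b * (m2 / n)) (k / ln n) \<theta>"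
    using assms by (simp add: powr_def)
  finally show ?thesis .
qed

section \<open>Point probabilities of a binomial distribution\<close>

lemma ln_fact_le: "ln (fact x :: real) \<le> (x + 1) * ln (x + 1) - x"
proof (induction x)
  case (Suc x)
  have "ln (real x + 1) - ln (real x + 2) = ln ((real x + 1) / (real x + 2))"
    by (simp add: ln_div)
  also have "\<dots> \<le> (real x + 1) / (real x + 2) - 1"
    by (rule ln_le_minus_one) simp
  finally have "(real x + 2) * (ln (real x + 1) - ln (real x + 2)) \<le> - 1"
    by (simp add: field_simps)
  moreover have "ln (fact (Suc x) :: real) = ln (real x + 1) + ln (fact x)"
    by (simp add: ln_mult add.commute)
  ultimately show ?case
    using Suc by (simp add: algebra_simps)
qed simp

lemma pow_mult_fact_le_fact_add: "real j ^ i * fact j \<le> (fact (j + i) :: real)"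
proof (induction i)
  case (Suc i)
  have "real j ^ Suc i * fact j = real j * (real j ^ i * fact j)"
    by simp
  also have "\<dots> \<le> real (Suc (j + i)) * fact (j + i)"
    using Suc by (intro mult_mono) auto
  finally show ?case
    by simp
qed simp

lemma pow_div_fact_le_binomial:
  assumes "x \<le> m"
  shows "real (m - x) ^ x / fact x \<le> real (m choose x)"
  using pow_mult_fact_le_fact_add[of "m - x" x] assms by (simp add: binomial_fact field_simps)

lemma ln_one_minus_ge:
  fixes p :: real
  assumes "0 \<le> p" "p < 1"
  shows "- p / (1 - p) \<le> ln (1 - p)"
proof -
  have "ln (1 / (1 - p)) \<le> 1 / (1 - p) - 1"
    using assms by (intro ln_le_minus_one) simp
  then show ?thesis
    using assms by (simp add: ln_div field_simps)
qed

lemma ln_pmf_binomial_ge: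
  fixes p :: real
  assumes "0 < p" "p < 1" "x = 0 \<or> x < m"
  shows "0 < pmf (binomial_pmf m p) x"
    and "real x * ln ((real m - real x) * p / (real x + 1)) + real x - ln (real x + 1) - real m * p / (1 - p)
           \<le> ln (pmf (binomial_pmf m p) x)"
proof -
  have pmf_eq: "pmf (binomial_pmf m p) x = real (m choose x) * p ^ x * (1 - p) ^ (m - x)"
    using assms by (intro pmf_binomial) auto
  have "x \<le> m"
    using assms(3) by auto
  then show "0 < pmf (binomial_pmf m p) x"
    using assms by (simp add: pmf_eq)
  have ln_eq: "ln (pmf (binomial_pmf m p) x)
                 = ln (real (m choose x)) + real x * ln p + (real m - real x) * ln (1 - p)"
    using \<open>x \<le> m\<close> assms by (simp add: pmf_eq ln_mult ln_realpow of_nat_diff)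
  have "- (real m * p / (1 - p)) \<le> real m * ln (1 - p)"
    using mult_left_mono[OF ln_one_minus_ge[of p], of "real m"] assms by simp
  also have "\<dots> \<le> (real m - real x) * ln (1 - p)"
    using assms by (intro mult_right_mono_neg) auto
  finally have tail: "- (real m * p / (1 - p)) \<le> (real m - real x) * ln (1 - p)" .
  show "real x * ln ((real m - real x) * p / (real x + 1)) + real x - ln (real x + 1) - real m * p / (1 - p)
          \<le> ln (pmf (binomial_pmf m p) x)"
  proof (cases "x = 0")
    case True
    with tail ln_eq show ?thesis
      by simp
  next
    case False
    with assms have "x < m"
      by simp
    have "real x * ln (real m - real x) - ln (fact x) = ln (real (m - x) ^ x / fact x)"
      using \<open>x < m\<close> by (simp add: ln_div ln_realpow of_nat_diff)
    also have "\<dots> \<le> ln (real (m choose x))"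
      using \<open>x < m\<close> pow_div_fact_le_binomial[of x m] by (subst ln_le_cancel_iff) auto
    finally have "real x * ln (real m - real x) - ln (fact x) \<le> ln (real (m choose x))" .
    moreover have "ln ((real m - real x) * p / (real x + 1)) = ln (real m - real x) + ln p - ln (real x + 1)"
      using \<open>x < m\<close> assms by (simp add: ln_mult ln_div)
    then have "real x * ln ((real m - real x) * p / (real x + 1))
                 = real x * ln (real m - real x) + real x * ln p - real x * ln (real x + 1)"
      by (simp only: distrib_left right_diff_distrib)
    moreover have "(real x + 1) * ln (real x + 1) = real x * ln (real x + 1) + ln (real x + 1)"
      by (simp add: algebra_simps)
    ultimately show ?thesis
      using ln_fact_le[of x] tail ln_eq by linarith
  qed
qed

lemma pmf_mult_pmf_le_diff_prob:
  assumes "int x - int r \<le> k"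
  shows "pmf (binomial_pmf m1 (a * ln n / n)) x * pmf (binomial_pmf m2 (b * ln n / n)) r
           \<le> diff_prob a b n m1 m2 k"
proof -
  let ?M = "pair_pmf (binomial_pmf m1 (a * ln n / n)) (binomial_pmf m2 (b * ln n / n))"
  have "pmf (binomial_pmf m1 (a * ln n / n)) x * pmf (binomial_pmf m2 (b * ln n / n)) r
          = measure_pmf.prob ?M {(x, r)}"
    by (simp add: pmf_pair measure_pmf_single)
  also have "\<dots> \<le> diff_prob a b n m1 m2 k"
    unfolding diff_prob_def using assms by (intro measure_pmf.finite_measure_mono) auto
  finally show ?thesis .
qed

section \<open>The rate function\<close>

text \<open>\<open>n powr poisson_rate (a * \<rho>) c\<close> is the order of \<open>P{Bin(\<rho> n, a log n / n) = c log n}\<close>.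
  At \<open>c = 0\<close> the junk value \<open>ln (\<mu> / 0)\<close> is multiplied by \<open>0\<close>, giving the correct value \<open>-\<mu>\<close>.\<close>

definition poisson_rate :: "real \<Rightarrow> real \<Rightarrow> real" where
  "poisson_rate \<mu> c = c * ln (\<mu> / c) + c - \<mu>"

lemma chernoff_exponent_ln_eq_poisson_rates:
  assumes "0 < y" "\<mu>1 = c1 * y" "\<mu>2 * y = c2"
  shows "chernoff_exponent \<mu>1 \<mu>2 (c1 - c2) (ln y) = poisson_rate \<mu>1 c1 + poisson_rate \<mu>2 c2"
proof -
  have "c1 * ln (\<mu>1 / c1) = ln y * c1"
    using assms by (cases "c1 = 0") simp_all
  moreover have "c2 * ln (\<mu>2 / c2) = - (ln y * c2)"
  proof (cases "c2 = 0")
    case False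
    then have "\<mu>2 / c2 = 1 / y"
      using assms by (auto simp: field_simps)
    then show ?thesis
      using assms by (simp add: ln_div)
  qed simp
  moreover have "\<mu>1 * exp (- ln y) = c1" "\<mu>2 * exp (ln y) = c2"
    using assms by (simp_all add: exp_minus field_simps)
  ultimately show ?thesis
    unfolding chernoff_exponent_def poisson_rate_def right_diff_distrib by linarith
qed

lemma tilt_exists:
  fixes a b \<rho>1 \<rho>2 \<alpha> :: real
  defines "\<gamma> \<equiv> sqrt (\<alpha>\<^sup>2 + 4 * \<rho>1 * \<rho>2 * a * b)"
  assumes "0 < a" "0 < b" "0 \<le> \<rho>1" "0 \<le> \<rho>2" and "\<alpha> \<le> a * \<rho>1 - b * \<rho>2" and "\<rho>2 = 0 \<Longrightarrow> 0 < \<alpha>"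
  obtains y where "1 \<le> y" "a * \<rho>1 = (\<gamma> + \<alpha>) / 2 * y" "b * \<rho>2 * y = (\<gamma> - \<alpha>) / 2"
proof (cases "\<rho>2 = 0")
  case True
  then have "\<gamma> = \<alpha>"
    using assms by (simp add: \<gamma>_def)
  then show ?thesis
    using True assms by (intro that[of "a * \<rho>1 / \<alpha>"]) simp_all
next
  case False
  then have "0 < b * \<rho>2"
    using assms by simp
  have \<gamma>_sq: "\<gamma>\<^sup>2 = \<alpha>\<^sup>2 + 4 * (a * \<rho>1) * (b * \<rho>2)"
    using assms by (simp add: \<gamma>_def algebra_simps)
  have "\<alpha> + 2 * (b * \<rho>2) \<le> \<gamma>"
  proof (rule power2_le_imp_le)
    have "4 * (b * \<rho>2) * (\<alpha> + b * \<rho>2) \<le> 4 * (b * \<rho>2) * (a * \<rho>1)"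
      using assms \<open>0 < b * \<rho>2\<close> by (intro mult_left_mono) auto
    then show "(\<alpha> + 2 * (b * \<rho>2))\<^sup>2 \<le> \<gamma>\<^sup>2"
      unfolding \<gamma>_sq by (simp add: power2_eq_square algebra_simps)
  qed (use assms in \<open>simp add: \<gamma>_def\<close>)
  define y where "y = (\<gamma> - \<alpha>) / (2 * (b * \<rho>2))"
  have "(\<gamma> + \<alpha>) / 2 * y = (\<gamma> + \<alpha>) * (\<gamma> - \<alpha>) / (4 * (b * \<rho>2))"
    by (simp add: y_def)
  also have "(\<gamma> + \<alpha>) * (\<gamma> - \<alpha>) = 4 * (a * \<rho>1) * (b * \<rho>2)"
    using \<gamma>_sq by (simp add: power2_eq_square algebra_simps)
  finally have "(\<gamma> + \<alpha>) / 2 * y = a * \<rho>1"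
    using assms False by simp
  moreover have "1 \<le> y" "b * \<rho>2 * y = (\<gamma> - \<alpha>) / 2"
    using \<open>\<alpha> + 2 * (b * \<rho>2) \<le> \<gamma>\<close> assms False by (simp_all add: y_def field_simps)
  ultimately show ?thesis
    using that by simp
qed

lemma g_rate_interior_eq_tilt:
  fixes a b \<rho>1 \<rho>2 \<alpha> y :: real
  defines "\<gamma> \<equiv> sqrt (\<alpha>\<^sup>2 + 4 * \<rho>1 * \<rho>2 * a * b)"
  assumes ab: "0 < a" "0 < b" and \<rho>: "0 < \<rho>1" "0 < \<rho>2"
    and y: "0 < y" and tilt: "a * \<rho>1 = (\<gamma> + \<alpha>) / 2 * y" "b * \<rho>2 * y = (\<gamma> - \<alpha>) / 2"
  shows "g_rate \<rho>1 \<rho>2 a b \<alpha> = a * \<rho>1 + b * \<rho>2 - \<gamma> - ln y * \<alpha>"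
proof -
  have "0 < (\<gamma> + \<alpha>) / 2 * y"
    unfolding tilt(1)[symmetric] using ab \<rho> by simp
  then have "0 < \<gamma> + \<alpha>"
    using y by (simp add: zero_less_mult_iff)
  have "(\<gamma> - \<alpha>) * (a * \<rho>1) = (\<gamma> + \<alpha>) * y * ((\<gamma> - \<alpha>) / 2)"
    unfolding tilt by (simp add: algebra_simps)
  also have "\<dots> = ((\<gamma> + \<alpha>) * (b * \<rho>2)) * y\<^sup>2"
    unfolding tilt(2)[symmetric] by (simp add: power2_eq_square algebra_simps)
  finally have "(\<gamma> - \<alpha>) * a * \<rho>1 / ((\<gamma> + \<alpha>) * b * \<rho>2)
                  = ((\<gamma> + \<alpha>) * b * \<rho>2) * y\<^sup>2 / ((\<gamma> + \<alpha>) * b * \<rho>2)"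
    by (simp only: mult.assoc)
  also have "\<dots> = y\<^sup>2"
    using \<open>0 < \<gamma> + \<alpha>\<close> \<rho> ab by (intro nonzero_mult_div_cancel_left) simp
  finally have "(\<gamma> - \<alpha>) * a * \<rho>1 / ((\<gamma> + \<alpha>) * b * \<rho>2) = y\<^sup>2" .
  then show ?thesis
    using \<rho> y by (simp add: g_rate_def Let_def \<gamma>_def[symmetric] ln_realpow)
qed

lemma g_rate_boundary_eq_tilt:
  fixes a b \<rho>1 \<rho>2 \<alpha> y :: real
  defines "\<gamma> \<equiv> sqrt (\<alpha>\<^sup>2 + 4 * \<rho>1 * \<rho>2 * a * b)"
  assumes ab: "0 < a" "0 < b" and \<rho>: "\<rho>1 = 0 \<and> 0 < \<rho>2 \<or> 0 < \<rho>1 \<and> \<rho>2 = 0"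
    and y: "0 < y" and tilt: "a * \<rho>1 = (\<gamma> + \<alpha>) / 2 * y" "b * \<rho>2 * y = (\<gamma> - \<alpha>) / 2"
  shows "g_rate \<rho>1 \<rho>2 a b \<alpha> = a * \<rho>1 + b * \<rho>2 - \<gamma> - ln y * \<alpha>"
  using \<rho>
proof
  assume \<rho>': "\<rho>1 = 0 \<and> 0 < \<rho>2"
  moreover have "0 < b * \<rho>2 * y"
    using ab y \<rho>' by simp
  ultimately have "\<gamma> = - \<alpha>" "0 < - \<alpha>"
    using y tilt by auto
  have "- exp 1 * \<rho>2 * b / \<alpha> = exp 1 * (b * \<rho>2 * y) / (- \<alpha> * y)"
    using y by (simp add: field_simps)
  also have "\<dots> = exp 1 / y"
    unfolding tilt(2) using \<open>\<gamma> = - \<alpha>\<close> \<open>0 < - \<alpha>\<close> by simp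
  finally have ln_eq: "ln (- exp 1 * \<rho>2 * b / \<alpha>) = 1 - ln y"
    using y by (simp add: ln_div)
  have "g_rate \<rho>1 \<rho>2 a b \<alpha> = \<rho>2 * b + \<alpha> * ln (- exp 1 * \<rho>2 * b / \<alpha>)"
    using \<rho>' by (simp add: g_rate_def)
  also have "\<dots> = \<rho>2 * b + \<alpha> * (1 - ln y)"
    by (simp only: ln_eq)
  finally show ?thesis
    using \<rho>' \<open>\<gamma> = - \<alpha>\<close> by (simp add: algebra_simps)
next
  assume \<rho>': "0 < \<rho>1 \<and> \<rho>2 = 0"
  moreover have "0 < a * \<rho>1"
    using ab \<rho>' by simp
  ultimately have "\<gamma> = \<alpha>" "0 < \<alpha>"
    using y tilt by (auto simp: zero_less_mult_iff)
  have "exp 1 * \<rho>1 * a / \<alpha> = exp 1 * (a * \<rho>1) / \<alpha>"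
    by (simp add: ac_simps)
  also have "\<dots> = exp 1 * y"
    unfolding tilt(1) using \<open>\<gamma> = \<alpha>\<close> \<open>0 < \<alpha>\<close> by simp
  finally have ln_eq: "ln (exp 1 * \<rho>1 * a / \<alpha>) = 1 + ln y"
    using y by (simp add: ln_mult)
  have "g_rate \<rho>1 \<rho>2 a b \<alpha> = \<rho>1 * a - \<alpha> * ln (exp 1 * \<rho>1 * a / \<alpha>)"
    using \<rho>' by (simp add: g_rate_def)
  also have "\<dots> = \<rho>1 * a - \<alpha> * (1 + ln y)"
    by (simp only: ln_eq)
  finally show ?thesis
    using \<rho>' \<open>\<gamma> = \<alpha>\<close> by (simp add: algebra_simps)
qed

lemma g_rate_eq_chernoff_exponent:
  fixes a b \<rho>1 \<rho>2 \<alpha> y :: real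
  defines "\<gamma> \<equiv> sqrt (\<alpha>\<^sup>2 + 4 * \<rho>1 * \<rho>2 * a * b)"
  assumes ab: "0 < a" "0 < b" and \<rho>: "0 \<le> \<rho>1" "0 \<le> \<rho>2" "0 < \<rho>1 \<or> 0 < \<rho>2"
    and y: "0 < y" and tilt: "a * \<rho>1 = (\<gamma> + \<alpha>) / 2 * y" "b * \<rho>2 * y = (\<gamma> - \<alpha>) / 2"
  shows "- g_rate \<rho>1 \<rho>2 a b \<alpha> = chernoff_exponent (a * \<rho>1) (b * \<rho>2) \<alpha> (ln y)"
proof -
  have tilted: "a * \<rho>1 * exp (- ln y) = (\<gamma> + \<alpha>) / 2" "b * \<rho>2 * exp (ln y) = (\<gamma> - \<alpha>) / 2"
    using y tilt by (simp_all add: exp_minus field_simps)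
  have "chernoff_exponent (a * \<rho>1) (b * \<rho>2) \<alpha> (ln y) = ln y * \<alpha> + \<gamma> - a * \<rho>1 - b * \<rho>2"
    unfolding chernoff_exponent_def right_diff_distrib mult_1_right tilted by (simp add: field_simps)
  moreover have "g_rate \<rho>1 \<rho>2 a b \<alpha> = a * \<rho>1 + b * \<rho>2 - \<gamma> - ln y * \<alpha>"
  proof (cases "0 < \<rho>1 \<and> 0 < \<rho>2")
    case True
    then show ?thesis
      using g_rate_interior_eq_tilt[OF ab _ _ y tilt[unfolded \<gamma>_def]] unfolding \<gamma>_def by simp
  next
    case False
    with \<rho> have "\<rho>1 = 0 \<and> 0 < \<rho>2 \<or> 0 < \<rho>1 \<and> \<rho>2 = 0"
      by linarith
    then show ?thesis
      using g_rate_boundary_eq_tilt[OF ab _ y tilt[unfolded \<gamma>_def]] unfolding \<gamma>_def by simp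
  qed
  ultimately show ?thesis
    by simp
qed

lemma optimal_chernoff_exponent:
  fixes a b \<rho>1 \<rho>2 \<alpha> :: real
  assumes ab: "0 < a" "0 < b" and \<rho>: "0 \<le> \<rho>1" "0 \<le> \<rho>2" "0 < \<rho>1 \<or> 0 < \<rho>2"
    and \<alpha>: "\<alpha> \<le> a * \<rho>1 - b * \<rho>2" "\<rho>2 = 0 \<Longrightarrow> 0 < \<alpha>"
  obtains \<theta> where "0 \<le> \<theta>" "chernoff_exponent (a * \<rho>1) (b * \<rho>2) \<alpha> \<theta> = - g_rate \<rho>1 \<rho>2 a b \<alpha>"
proof -
  obtain y where "1 \<le> y"
    and tilt: "a * \<rho>1 = (sqrt (\<alpha>\<^sup>2 + 4 * \<rho>1 * \<rho>2 * a * b) + \<alpha>) / 2 * y"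
              "b * \<rho>2 * y = (sqrt (\<alpha>\<^sup>2 + 4 * \<rho>1 * \<rho>2 * a * b) - \<alpha>) / 2"
    using tilt_exists[OF ab \<rho>(1,2) \<alpha>] by blast
  show ?thesis
  proof
    show "0 \<le> ln y"
      using \<open>1 \<le> y\<close> by simp
    show "chernoff_exponent (a * \<rho>1) (b * \<rho>2) \<alpha> (ln y) = - g_rate \<rho>1 \<rho>2 a b \<alpha>"
      using g_rate_eq_chernoff_exponent[OF ab \<rho> _ tilt] \<open>1 \<le> y\<close> by simp
  qed
qed

lemma g_rate_eq_poisson_rates:
  fixes a b \<rho>1 \<rho>2 \<alpha> :: real
  assumes ab: "0 < a" "0 < b" and \<rho>: "0 \<le> \<rho>1" "0 \<le> \<rho>2" "0 < \<rho>1 \<or> 0 < \<rho>2"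
    and \<alpha>: "\<alpha> \<le> a * \<rho>1 - b * \<rho>2" "\<rho>2 = 0 \<Longrightarrow> 0 < \<alpha>"
  obtains c1 c2 where "- g_rate \<rho>1 \<rho>2 a b \<alpha> = poisson_rate (a * \<rho>1) c1 + poisson_rate (b * \<rho>2) c2"
    and "c1 - c2 = \<alpha>" "0 \<le> c1" "0 \<le> c2" "0 < c1 \<or> 0 < c2" "0 < c1 \<longrightarrow> 0 < \<rho>1" "0 < c2 \<longrightarrow> 0 < \<rho>2"
proof -
  define \<gamma> where "\<gamma> = sqrt (\<alpha>\<^sup>2 + 4 * \<rho>1 * \<rho>2 * a * b)"
  define c1 c2 where "c1 = (\<gamma> + \<alpha>) / 2" and "c2 = (\<gamma> - \<alpha>) / 2"
  obtain y where "1 \<le> y" and tilt: "a * \<rho>1 = c1 * y" "b * \<rho>2 * y = c2"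
    using tilt_exists[OF ab \<rho>(1,2) \<alpha>] unfolding c1_def c2_def \<gamma>_def by blast
  then have "0 < y" "c1 = a * \<rho>1 / y"
    by simp_all
  have "c1 - c2 = \<alpha>"
    by (simp add: c1_def c2_def field_simps)
  have "- g_rate \<rho>1 \<rho>2 a b \<alpha> = chernoff_exponent (a * \<rho>1) (b * \<rho>2) \<alpha> (ln y)"
    using \<open>0 < y\<close> by (rule g_rate_eq_chernoff_exponent[OF ab \<rho> _ tilt[unfolded c1_def c2_def \<gamma>_def]])
  also have "\<dots> = poisson_rate (a * \<rho>1) c1 + poisson_rate (b * \<rho>2) c2"
    using chernoff_exponent_ln_eq_poisson_rates[OF \<open>0 < y\<close> tilt] \<open>c1 - c2 = \<alpha>\<close> by simp
  finally have rate: "- g_rate \<rho>1 \<rho>2 a b \<alpha> = poisson_rate (a * \<rho>1) c1 + poisson_rate (b * \<rho>2) c2" .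
  have "0 \<le> c1" "0 \<le> c2" "0 < c1 \<or> 0 < c2" "0 < c1 \<longrightarrow> 0 < \<rho>1" "0 < c2 \<longrightarrow> 0 < \<rho>2"
    using ab \<rho> \<open>0 < y\<close> unfolding \<open>c1 = a * \<rho>1 / y\<close> tilt(2)[symmetric]
    by (auto simp: zero_less_mult_iff zero_less_divide_iff)
  with rate \<open>c1 - c2 = \<alpha>\<close> show ?thesis
    by (rule that)
qed

lemma diff_prob_le_powr_g_rate:
  fixes a b :: real and k :: int
  assumes ab: "0 < a" "0 < b" and n: "1 \<le> n" "a * ln n / n \<le> 1" "b * ln n / n \<le> 1"
    and m: "0 < m1 \<or> 0 < m2" and k: "k \<le> (m1 * a - m2 * b) * ln n / n" "m2 = 0 \<Longrightarrow> 0 < k"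
  shows "diff_prob a b n m1 m2 k \<le> real n powr (- g_rate (m1 / n) (m2 / n) a b (k / ln n))"
proof (cases "n = 1")
  case True
  then show ?thesis
    by (simp add: diff_prob_def)
next
  case False
  with n have "2 \<le> n" "0 < ln (real n)"
    by simp_all
  have \<rho>: "0 \<le> m1 / n" "0 \<le> m2 / n" "0 < m1 / n \<or> 0 < m2 / n"
    using m \<open>2 \<le> n\<close> by auto
  have \<alpha>: "k / ln n \<le> a * (m1 / n) - b * (m2 / n)" "m2 / n = 0 \<Longrightarrow> 0 < k / ln n"
    using k \<open>0 < ln (real n)\<close> \<open>2 \<le> n\<close> by (simp_all add: field_simps)
  obtain \<theta> where "0 \<le> \<theta>"
    and "chernoff_exponent (a * (m1 / n)) (b * (m2 / n)) (k / ln n) \<theta> = - g_rate (m1 / n) (m2 / n) a b (k / ln n)"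
    by (rule optimal_chernoff_exponent[OF ab \<rho> \<alpha>])
  then show ?thesis
    using diff_prob_le_powr_chernoff_exponent[OF \<open>2 \<le> n\<close> _ _ n(2,3) \<open>0 \<le> \<theta>\<close>, of m1 m2 k] ab
    by simp
qed

section \<open>Asymptotics\<close>

lemma eventually_ln_pos: "\<forall>\<^sub>F n in sequentially. 0 < ln (real n)"
  using eventually_ge_at_top[of "2 :: nat"] by eventually_elim simp

lemma tendsto_div_of_smallo:
  fixes f g :: "'a \<Rightarrow> real"
  assumes "(\<lambda>x. f x - c * g x) \<in> o[F](g)" and "\<forall>\<^sub>F x in F. g x \<noteq> 0"
  shows "((\<lambda>x. f x / g x) \<longlongrightarrow> c) F"
proof -
  have "((\<lambda>x. (f x - c * g x) / g x + c) \<longlongrightarrow> 0 + c) F"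
    by (intro tendsto_intros smalloD_tendsto[OF assms(1)])
  moreover have "\<forall>\<^sub>F x in F. (f x - c * g x) / g x + c = f x / g x"
    using assms(2) by eventually_elim (simp add: field_simps)
  ultimately show ?thesis
    by (simp add: tendsto_cong)
qed

lemma tendsto_nat_div_ln:
  fixes z :: "nat \<Rightarrow> int"
  assumes "(\<lambda>n. z n / ln n) \<longlonglongrightarrow> c"
  shows "(\<lambda>n. nat (z n) / ln n) \<longlonglongrightarrow> max 0 c"
proof -
  have "(\<lambda>n. max 0 (z n / ln n)) \<longlonglongrightarrow> max 0 c"
    by (intro tendsto_intros assms)
  moreover have "\<forall>\<^sub>F n in sequentially. max 0 (z n / ln n) = nat (z n) / ln n"
    using eventually_ln_pos by eventually_elim (auto simp: max_def zero_le_divide_iff)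
  ultimately show ?thesis
    by (simp add: tendsto_cong)
qed

lemma tendsto_floor_mult_ln_div: "(\<lambda>n. \<lfloor>c * ln n\<rfloor> / ln n) \<longlonglongrightarrow> c"
proof (rule tendsto_sandwich[where f = "\<lambda>n :: nat. c - 1 / ln n" and h = "\<lambda>_. c"])
  have "(\<lambda>n :: nat. 1 / ln n) \<longlonglongrightarrow> 0"
    by real_asymp
  from tendsto_diff[OF tendsto_const this, of c] show "(\<lambda>n. c - 1 / ln n) \<longlonglongrightarrow> c"
    by simp
  show "\<forall>\<^sub>F n in sequentially. c - 1 / ln n \<le> \<lfloor>c * ln n\<rfloor> / ln n"
    using eventually_ln_pos
  proof eventually_elim
    case (elim n)
    have "c * ln n - 1 \<le> \<lfloor>c * ln n\<rfloor>"
      by linarith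
    then have "(c * ln n - 1) / ln n \<le> \<lfloor>c * ln n\<rfloor> / ln n"
      using elim by (intro divide_right_mono) auto
    with elim show ?case
      by (simp add: diff_divide_distrib)
  qed
  show "\<forall>\<^sub>F n in sequentially. \<lfloor>c * ln n\<rfloor> / ln n \<le> c"
    using eventually_ln_pos by eventually_elim (simp add: field_simps)
qed simp

text \<open>A binomial with \<open>o(n)\<close> trials may have no trials at all, which is why a rate \<open>0\<close> is
  realised by the point \<open>0\<close> itself.\<close>

lemma integer_points_with_rates:
  fixes k :: "nat \<Rightarrow> int" and c1 c2 :: real
  assumes k: "(\<lambda>n. k n / ln n) \<longlonglongrightarrow> c1 - c2" and c: "0 \<le> c1" "0 \<le> c2" "0 < c1 \<or> 0 < c2"
  obtains x r :: "nat \<Rightarrow> nat"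
  where "(\<lambda>n. x n / ln n) \<longlonglongrightarrow> c1" "(\<lambda>n. r n / ln n) \<longlonglongrightarrow> c2"
    and "c1 = 0 \<Longrightarrow> x = (\<lambda>_. 0)" "c2 = 0 \<Longrightarrow> r = (\<lambda>_. 0)"
    and "\<forall>\<^sub>F n in sequentially. int (x n) - int (r n) \<le> k n"
proof (cases "0 < c2")
  case True
  \<comment> \<open>rounding \<open>x\<close> first and taking \<open>r = max 0 (x - k)\<close> makes \<open>x - r \<le> k\<close> hold for every \<open>n\<close>\<close>
  define x where "x n = nat \<lfloor>c1 * ln n\<rfloor>" for n
  define r where "r n = nat (int (x n) - k n)" for n
  have x: "(\<lambda>n. x n / ln n) \<longlonglongrightarrow> c1"
    using tendsto_nat_div_ln[OF tendsto_floor_mult_ln_div, of c1] c by (simp add: x_def)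
  have "(\<lambda>n. x n / ln n - k n / ln n) \<longlonglongrightarrow> c1 - (c1 - c2)"
    by (intro tendsto_intros x k)
  then have "(\<lambda>n. real_of_int (int (x n) - k n) / ln n) \<longlonglongrightarrow> c2"
    by (simp add: diff_divide_distrib)
  from tendsto_nat_div_ln[OF this] c have "(\<lambda>n. r n / ln n) \<longlonglongrightarrow> c2"
    by (simp add: r_def)
  moreover have "c1 = 0 \<Longrightarrow> x = (\<lambda>_. 0)"
    by (simp add: x_def fun_eq_iff)
  moreover have "int (x n) - int (r n) \<le> k n" for n
    by (simp add: r_def)
  ultimately show ?thesis
    using that x True by simp
next
  case False
  with c have "c2 = 0" "0 < c1"
    by simp_all
  define x where "x n = nat (k n)" for n
  have "(\<lambda>n. x n / ln n) \<longlonglongrightarrow> c1"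
    using tendsto_nat_div_ln[OF k] c \<open>c2 = 0\<close> by (simp add: x_def)
  moreover have "\<forall>\<^sub>F n in sequentially. 0 < k n / ln n"
    using order_tendstoD(1)[OF k] \<open>c2 = 0\<close> \<open>0 < c1\<close> by simp
  then have "\<forall>\<^sub>F n in sequentially. int (x n) - int 0 \<le> k n"
    using eventually_ln_pos by eventually_elim (simp add: x_def zero_less_divide_iff)
  ultimately show ?thesis
    using that[of x "\<lambda>_. 0"] \<open>c2 = 0\<close> \<open>0 < c1\<close> by simp
qed

lemma tendsto_div_of_tendsto_div_ln:
  fixes x :: "nat \<Rightarrow> real"
  assumes "(\<lambda>n. x n / ln n) \<longlonglongrightarrow> c"
  shows "(\<lambda>n. x n / n) \<longlonglongrightarrow> 0"
proof -
  have "(\<lambda>n :: nat. ln n / n) \<longlonglongrightarrow> 0"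
    by real_asymp
  with assms have "(\<lambda>n. x n / ln n * (ln n / n)) \<longlonglongrightarrow> c * 0"
    by (rule tendsto_mult)
  moreover have "\<forall>\<^sub>F n in sequentially. x n / ln n * (ln n / n) = x n / n"
    using eventually_ln_pos by eventually_elim simp
  ultimately show ?thesis
    by (simp add: Lim_transform_eventually)
qed

lemma tendsto_ln_add_one_div_ln:
  fixes x :: "nat \<Rightarrow> nat"
  assumes x: "(\<lambda>n. x n / ln n) \<longlonglongrightarrow> c" and "0 < c"
  shows "(\<lambda>n. ln (real (x n) + 1) / ln n) \<longlonglongrightarrow> 0"
proof -
  have inv: "(\<lambda>n :: nat. 1 / ln n) \<longlonglongrightarrow> 0" and lnln: "(\<lambda>n :: nat. ln (ln n) / ln n) \<longlonglongrightarrow> 0"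
    by real_asymp+
  have "(\<lambda>n. (real (x n) + 1) / ln n) \<longlonglongrightarrow> c"
    using tendsto_add[OF x inv] by (simp add: add_divide_distrib)
  then have "(\<lambda>n. ln ((real (x n) + 1) / ln n) * (1 / ln n) + ln (ln n) / ln n) \<longlonglongrightarrow> ln c * 0 + 0"
    using \<open>0 < c\<close> by (intro tendsto_intros inv lnln) auto
  then have "(\<lambda>n. ln ((real (x n) + 1) / ln n) * (1 / ln n) + ln (ln n) / ln n) \<longlonglongrightarrow> 0"
    by simp
  then show ?thesis
  proof (rule Lim_transform_eventually)
    show "\<forall>\<^sub>F n in sequentially.
        ln ((real (x n) + 1) / ln n) * (1 / ln n) + ln (ln n) / ln n = ln (real (x n) + 1) / ln n"
      using eventually_ln_pos by eventually_elim (simp add: ln_div field_simps)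
  qed
qed

lemma tendsto_ln_binomial_point_ratio:
  fixes m x :: "nat \<Rightarrow> nat" and a \<rho> c :: real
  assumes "0 < a" "0 < \<rho>" "0 < c"
    and m: "(\<lambda>n. m n / n) \<longlonglongrightarrow> \<rho>" and x: "(\<lambda>n. x n / ln n) \<longlonglongrightarrow> c"
  shows "(\<lambda>n. x n / ln n * ln ((real (m n) - real (x n)) * (a * ln n / n) / (real (x n) + 1)))
           \<longlonglongrightarrow> c * ln (a * \<rho> / c)"
proof -
  have inv: "(\<lambda>n :: nat. 1 / ln n) \<longlonglongrightarrow> 0"
    by real_asymp
  have mx: "(\<lambda>n. m n / n - x n / n) \<longlonglongrightarrow> \<rho> - 0"
    using m tendsto_div_of_tendsto_div_ln[OF x] by (rule tendsto_diff)
  have "(\<lambda>n. 1 / (x n / ln n + 1 / ln n)) \<longlonglongrightarrow> 1 / (c + 0)"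
    using \<open>0 < c\<close> by (intro tendsto_intros x inv) auto
  from tendsto_mult[OF tendsto_mult[OF mx tendsto_const[of a]] this]
  have "(\<lambda>n. (m n / n - x n / n) * a * (1 / (x n / ln n + 1 / ln n))) \<longlonglongrightarrow> (\<rho> - 0) * a * (1 / (c + 0))" .
  moreover have "(m n / n - x n / n) * a * (1 / (x n / ln n + 1 / ln n))
                   = (real (m n) - real (x n)) * (a * ln n / n) / (real (x n) + 1)" for n
    by (cases "n = 0"; cases "ln n = 0") (simp_all add: field_simps)
  ultimately have "(\<lambda>n. ln ((real (m n) - real (x n)) * (a * ln n / n) / (real (x n) + 1)))
                     \<longlonglongrightarrow> ln ((\<rho> - 0) * a * (1 / (c + 0)))"
    using assms by (intro tendsto_ln) auto
  from tendsto_mult[OF x this] show ?thesis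
    by (simp add: ac_simps)
qed

lemma tendsto_ln_pmf_binomial_bound:
  fixes m x :: "nat \<Rightarrow> nat" and a \<rho> c :: real and p :: "nat \<Rightarrow> real"
  defines "p \<equiv> \<lambda>n. a * ln n / n"
  assumes a: "0 < a" and m: "(\<lambda>n. m n / n) \<longlonglongrightarrow> \<rho>" and x: "(\<lambda>n. x n / ln n) \<longlonglongrightarrow> c"
    and c: "0 < c \<and> 0 < \<rho> \<or> x = (\<lambda>_. 0)"
  shows "(\<lambda>n. (real (x n) * ln ((real (m n) - real (x n)) * p n / (real (x n) + 1)) + real (x n)
              - ln (real (x n) + 1) - real (m n) * p n / (1 - p n)) / ln n)
           \<longlonglongrightarrow> poisson_rate (a * \<rho>) c"
proof -
  define T where "T = (\<lambda>n. real (x n) / ln n * ln ((real (m n) - real (x n)) * p n / (real (x n) + 1)))"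
  have "(\<lambda>n :: nat. ln n / n) \<longlonglongrightarrow> 0"
    by real_asymp
  from tendsto_mult[OF tendsto_const this, of a] have p: "p \<longlonglongrightarrow> 0"
    by (simp add: p_def)
  have "T \<longlonglongrightarrow> c * ln (a * \<rho> / c) \<and> (\<lambda>n. ln (real (x n) + 1) / ln n) \<longlonglongrightarrow> 0"
  proof (cases "x = (\<lambda>_. 0)")
    case True
    then have "(\<lambda>n. x n / ln n) \<longlonglongrightarrow> 0"
      by simp
    with x have "c = 0"
      by (rule LIMSEQ_unique)
    with True show ?thesis
      by (simp add: T_def)
  next
    case False
    with c have "0 < c" "0 < \<rho>"
      by auto
    then show ?thesis
      using tendsto_ln_binomial_point_ratio[OF a _ _ m x] tendsto_ln_add_one_div_ln[OF x]
      by (simp add: T_def p_def)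
  qed
  moreover have "(\<lambda>n. m n / n * a / (1 - p n)) \<longlonglongrightarrow> \<rho> * a / (1 - 0)"
    by (intro tendsto_intros m p) simp
  ultimately have "(\<lambda>n. T n + x n / ln n - ln (real (x n) + 1) / ln n - m n / n * a / (1 - p n))
                     \<longlonglongrightarrow> c * ln (a * \<rho> / c) + c - 0 - \<rho> * a / (1 - 0)"
    by (intro tendsto_diff tendsto_add x) auto
  also have "c * ln (a * \<rho> / c) + c - 0 - \<rho> * a / (1 - 0) = poisson_rate (a * \<rho>) c"
    by (simp add: poisson_rate_def)
  finally show ?thesis
  proof (rule Lim_transform_eventually)
    show "\<forall>\<^sub>F n in sequentially. T n + x n / ln n - ln (real (x n) + 1) / ln n - m n / n * a / (1 - p n)
      = (real (x n) * ln ((real (m n) - real (x n)) * p n / (real (x n) + 1)) + real (x n)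
              - ln (real (x n) + 1) - real (m n) * p n / (1 - p n)) / ln n"
      using eventually_ln_pos by eventually_elim (simp add: T_def p_def field_simps)
  qed
qed

lemma pmf_binomial_ge_powr:
  fixes m x :: "nat \<Rightarrow> nat" and a \<rho> c :: real
  assumes a: "0 < a" and m: "(\<lambda>n. m n / n) \<longlonglongrightarrow> \<rho>" and x: "(\<lambda>n. x n / ln n) \<longlonglongrightarrow> c"
    and c: "0 < c \<and> 0 < \<rho> \<or> x = (\<lambda>_. 0)"
  obtains V where "V \<longlonglongrightarrow> poisson_rate (a * \<rho>) c"
    and "\<forall>\<^sub>F n in sequentially. real n powr V n \<le> pmf (binomial_pmf (m n) (a * ln n / n)) (x n)"
proof
  define p where "p = (\<lambda>n :: nat. a * ln n / n)"
  define V where "V = (\<lambda>n. (real (x n) * ln ((real (m n) - real (x n)) * p n / (real (x n) + 1)) + real (x n)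
                          - ln (real (x n) + 1) - real (m n) * p n / (1 - p n)) / ln n)"
  show "V \<longlonglongrightarrow> poisson_rate (a * \<rho>) c"
    using tendsto_ln_pmf_binomial_bound[OF a m x c] by (simp only: V_def p_def)
  have "(\<lambda>n :: nat. a * ln n / n) \<longlonglongrightarrow> 0"
    by real_asymp
  then have "\<forall>\<^sub>F n in sequentially. p n < 1"
    by (auto simp: p_def intro: order_tendstoD(2))
  moreover have "\<forall>\<^sub>F n in sequentially. x n = 0 \<or> x n < m n"
  proof (cases "x = (\<lambda>_. 0)")
    case False
    with c have "0 < \<rho>"
      by auto
    from tendsto_diff[OF m tendsto_div_of_tendsto_div_ln[OF x]]
    have "\<forall>\<^sub>F n in sequentially. 0 < m n / n - x n / n"
      by (rule order_tendstoD(1)) (use \<open>0 < \<rho>\<close> in simp)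
    then show ?thesis
      using eventually_gt_at_top[of 0] by eventually_elim (auto simp: field_simps)
  qed simp
  ultimately show "\<forall>\<^sub>F n in sequentially. real n powr V n \<le> pmf (binomial_pmf (m n) (a * ln n / n)) (x n)"
    using eventually_ln_pos
  proof eventually_elim
    case (elim n)
    then have "0 < real n"
      by (cases n) auto
    with elim a have "0 < p n"
      by (simp add: p_def)
    have "real n powr V n = exp (ln n * V n)"
      using \<open>0 < real n\<close> by (simp add: powr_def mult.commute)
    also have "ln n * V n = real (x n) * ln ((real (m n) - real (x n)) * p n / (real (x n) + 1)) + real (x n)
                              - ln (real (x n) + 1) - real (m n) * p n / (1 - p n)"
      using elim by (simp add: V_def)
    also have "exp \<dots> \<le> exp (ln (pmf (binomial_pmf (m n) (p n)) (x n)))"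
      using ln_pmf_binomial_ge(2)[OF \<open>0 < p n\<close>] elim by simp
    also have "\<dots> = pmf (binomial_pmf (m n) (a * ln n / n)) (x n)"
      using ln_pmf_binomial_ge(1)[OF \<open>0 < p n\<close>] elim by (simp add: p_def)
    finally show ?case .
  qed
qed

lemma diff_prob_upper:
  fixes a b \<rho>1 \<rho>2 \<alpha> :: real and m1 m2 :: "nat \<Rightarrow> nat" and k :: "nat \<Rightarrow> int"
  assumes ab: "0 < a" "0 < b" and \<rho>: "0 \<le> \<rho>1" "0 \<le> \<rho>2" "0 < \<rho>1 \<or> 0 < \<rho>2"
    and \<alpha>: "\<alpha> \<le> a * \<rho>1 - b * \<rho>2" "\<rho>2 = 0 \<Longrightarrow> 0 < \<alpha>"
    and m1: "(\<lambda>n. m1 n / n) \<longlonglongrightarrow> \<rho>1" and m2: "(\<lambda>n. m2 n / n) \<longlonglongrightarrow> \<rho>2"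
    and k: "(\<lambda>n. k n / ln n) \<longlonglongrightarrow> \<alpha>"
  obtains U where "U \<longlonglongrightarrow> - g_rate \<rho>1 \<rho>2 a b \<alpha>"
    and "\<forall>\<^sub>F n in sequentially. diff_prob a b n (m1 n) (m2 n) (k n) \<le> real n powr U n"
proof -
  obtain \<theta> where "0 \<le> \<theta>" and \<theta>: "chernoff_exponent (a * \<rho>1) (b * \<rho>2) \<alpha> \<theta> = - g_rate \<rho>1 \<rho>2 a b \<alpha>"
    by (rule optimal_chernoff_exponent[OF ab \<rho> \<alpha>])
  define U where "U n = chernoff_exponent (a * (m1 n / n)) (b * (m2 n / n)) (k n / ln n) \<theta>" for n
  have small_p: "\<forall>\<^sub>F n in sequentially. c * ln n / n \<le> 1" for c
  proof -
    have "(\<lambda>n :: nat. c * ln n / n) \<longlonglongrightarrow> 0"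
      by real_asymp
    from order_tendstoD(2)[OF this, of 1] show ?thesis
      by (auto elim: eventually_mono)
  qed
  have "\<forall>\<^sub>F n in sequentially. diff_prob a b n (m1 n) (m2 n) (k n) \<le> real n powr U n"
    using eventually_ge_at_top[of 2] small_p[of a] small_p[of b]
  proof eventually_elim
    case (elim n)
    show ?case
      unfolding U_def using elim ab \<open>0 \<le> \<theta>\<close> by (intro diff_prob_le_powr_chernoff_exponent) auto
  qed
  moreover have "U \<longlonglongrightarrow> chernoff_exponent (a * \<rho>1) (b * \<rho>2) \<alpha> \<theta>"
    unfolding U_def chernoff_exponent_def by (intro tendsto_intros m1 m2 k)
  ultimately show ?thesis
    using that \<theta> by simp
qed

lemma diff_prob_lower:
  fixes a b \<rho>1 \<rho>2 \<alpha> :: real and m1 m2 :: "nat \<Rightarrow> nat" and k :: "nat \<Rightarrow> int"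
  assumes ab: "0 < a" "0 < b" and \<rho>: "0 \<le> \<rho>1" "0 \<le> \<rho>2" "0 < \<rho>1 \<or> 0 < \<rho>2"
    and \<alpha>: "\<alpha> \<le> a * \<rho>1 - b * \<rho>2" "\<rho>2 = 0 \<Longrightarrow> 0 < \<alpha>"
    and m1: "(\<lambda>n. m1 n / n) \<longlonglongrightarrow> \<rho>1" and m2: "(\<lambda>n. m2 n / n) \<longlonglongrightarrow> \<rho>2"
    and k: "(\<lambda>n. k n / ln n) \<longlonglongrightarrow> \<alpha>"
  obtains V where "V \<longlonglongrightarrow> - g_rate \<rho>1 \<rho>2 a b \<alpha>"
    and "\<forall>\<^sub>F n in sequentially. real n powr V n \<le> diff_prob a b n (m1 n) (m2 n) (k n)"
proof -
  obtain c1 c2 where rate: "- g_rate \<rho>1 \<rho>2 a b \<alpha> = poisson_rate (a * \<rho>1) c1 + poisson_rate (b * \<rho>2) c2"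
    and "c1 - c2 = \<alpha>" and c: "0 \<le> c1" "0 \<le> c2" "0 < c1 \<or> 0 < c2" "0 < c1 \<longrightarrow> 0 < \<rho>1" "0 < c2 \<longrightarrow> 0 < \<rho>2"
    by (rule g_rate_eq_poisson_rates[OF ab \<rho> \<alpha>])
  have "(\<lambda>n. k n / ln n) \<longlonglongrightarrow> c1 - c2"
    using k by (simp add: \<open>c1 - c2 = \<alpha>\<close>)
  then obtain x r where lim: "(\<lambda>n. x n / ln n) \<longlonglongrightarrow> c1" "(\<lambda>n. r n / ln n) \<longlonglongrightarrow> c2"
    and zero: "c1 = 0 \<Longrightarrow> x = (\<lambda>_. 0)" "c2 = 0 \<Longrightarrow> r = (\<lambda>_. 0)"
    and xr: "\<forall>\<^sub>F n in sequentially. int (x n) - int (r n) \<le> k n"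
    using integer_points_with_rates c(1-3) by blast
  have "0 < c1 \<and> 0 < \<rho>1 \<or> x = (\<lambda>_. 0)" "0 < c2 \<and> 0 < \<rho>2 \<or> r = (\<lambda>_. 0)"
    using c zero by force+
  obtain V1 where V1: "V1 \<longlonglongrightarrow> poisson_rate (a * \<rho>1) c1"
    "\<forall>\<^sub>F n in sequentially. real n powr V1 n \<le> pmf (binomial_pmf (m1 n) (a * ln n / n)) (x n)"
    by (rule pmf_binomial_ge_powr[OF ab(1) m1 lim(1) \<open>0 < c1 \<and> 0 < \<rho>1 \<or> x = (\<lambda>_. 0)\<close>])
  obtain V2 where V2: "V2 \<longlonglongrightarrow> poisson_rate (b * \<rho>2) c2"
    "\<forall>\<^sub>F n in sequentially. real n powr V2 n \<le> pmf (binomial_pmf (m2 n) (b * ln n / n)) (r n)"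
    by (rule pmf_binomial_ge_powr[OF ab(2) m2 lim(2) \<open>0 < c2 \<and> 0 < \<rho>2 \<or> r = (\<lambda>_. 0)\<close>])
  have "\<forall>\<^sub>F n in sequentially. real n powr (V1 n + V2 n) \<le> diff_prob a b n (m1 n) (m2 n) (k n)"
    using V1(2) V2(2) xr
  proof eventually_elim
    case (elim n)
    have "real n powr (V1 n + V2 n) = real n powr V1 n * real n powr V2 n"
      by (simp add: powr_add)
    also have "\<dots> \<le> pmf (binomial_pmf (m1 n) (a * ln n / n)) (x n) * pmf (binomial_pmf (m2 n) (b * ln n / n)) (r n)"
      using elim by (intro mult_mono) auto
    also have "\<dots> \<le> diff_prob a b n (m1 n) (m2 n) (k n)"
      using elim(3) by (rule pmf_mult_pmf_le_diff_prob)
    finally show ?case .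
  qed
  moreover have "(\<lambda>n. V1 n + V2 n) \<longlonglongrightarrow> - g_rate \<rho>1 \<rho>2 a b \<alpha>"
    unfolding rate by (intro tendsto_add V1(1) V2(1))
  ultimately show ?thesis
    using that by blast
qed

lemma powr_exponent_sandwich:
  fixes P U V :: "nat \<Rightarrow> real"
  assumes "V \<longlonglongrightarrow> l" "U \<longlonglongrightarrow> l"
    and "\<forall>\<^sub>F n in sequentially. real n powr V n \<le> P n" "\<forall>\<^sub>F n in sequentially. P n \<le> real n powr U n"
  shows "\<exists>\<epsilon>. \<epsilon> \<longlonglongrightarrow> 0 \<and> (\<forall>\<^sub>F n in sequentially. P n = real n powr (l + \<epsilon> n))"
proof -
  define \<epsilon> where "\<epsilon> = (\<lambda>n. ln (P n) / ln n - l)"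
  have bounds: "\<forall>\<^sub>F n in sequentially. 0 < P n \<and> V n - l \<le> \<epsilon> n \<and> \<epsilon> n \<le> U n - l"
    using assms(3,4) eventually_ln_pos
  proof eventually_elim
    case (elim n)
    then have "0 < real n"
      by (cases n) auto
    then have "0 < real n powr V n"
      by simp
    with elim(1) have "0 < P n"
      by linarith
    have "V n * ln n \<le> ln (P n)"
      using ln_mono[OF elim(1) \<open>0 < real n powr V n\<close>] by simp
    moreover have "ln (P n) \<le> U n * ln n"
      using ln_mono[OF elim(2) \<open>0 < P n\<close>] by simp
    ultimately show ?case
      using \<open>0 < P n\<close> elim(3) by (simp add: \<epsilon>_def field_simps)
  qed
  have "\<epsilon> \<longlonglongrightarrow> 0"
  proof (rule tendsto_sandwich[where f = "\<lambda>n. V n - l" and h = "\<lambda>n. U n - l"])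
    show "\<forall>\<^sub>F n in sequentially. V n - l \<le> \<epsilon> n" "\<forall>\<^sub>F n in sequentially. \<epsilon> n \<le> U n - l"
      using bounds by (auto elim: eventually_mono)
    show "(\<lambda>n. V n - l) \<longlonglongrightarrow> 0" "(\<lambda>n. U n - l) \<longlonglongrightarrow> 0"
      using tendsto_diff[OF assms(1) tendsto_const[of l]] tendsto_diff[OF assms(2) tendsto_const[of l]] by simp_all
  qed
  moreover have "\<forall>\<^sub>F n in sequentially. P n = real n powr (l + \<epsilon> n)"
    using bounds eventually_ln_pos eventually_ge_at_top[of 2]
    by eventually_elim (simp add: \<epsilon>_def powr_def)
  ultimately show ?thesis
    by blast
qed

theorem lemma2:
  fixes a b \<alpha> \<rho>1 \<rho>2 :: real
  assumes "a > 0" and "b > 0"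
  shows
    "(\<forall>(m1 :: nat \<Rightarrow> nat) (m2 :: nat \<Rightarrow> nat) (k :: nat \<Rightarrow> int).
        \<rho>1 \<ge> 0 \<longrightarrow> \<rho>2 \<ge> 0 \<longrightarrow> (\<rho>1 > 0 \<or> \<rho>2 > 0) \<longrightarrow>
        (\<lambda>n. real (m1 n) - \<rho>1 * real n) \<in> o(\<lambda>n. real n) \<longrightarrow>
        (\<lambda>n. real (m2 n) - \<rho>2 * real n) \<in> o(\<lambda>n. real n) \<longrightarrow>
        (\<lambda>n. real_of_int (k n) - \<alpha> * ln (real n)) \<in> o(\<lambda>n. ln (real n)) \<longrightarrow>
        \<alpha> \<le> a * \<rho>1 - b * \<rho>2 \<longrightarrow>
        (\<rho>2 = 0 \<longrightarrow> \<alpha> > 0) \<longrightarrow>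
        (\<exists>\<epsilon> :: nat \<Rightarrow> real. \<epsilon> \<longlonglongrightarrow> 0 \<and>
           (\<forall>\<^sub>F n in sequentially.
              diff_prob a b n (m1 n) (m2 n) (k n) = real n powr (- g_rate \<rho>1 \<rho>2 a b \<alpha> + \<epsilon> n))))
     \<and>
     (\<forall>(n :: nat) (m1 :: nat) (m2 :: nat) (k :: int).
        n \<ge> 1 \<longrightarrow> a * ln (real n) / real n \<le> 1 \<longrightarrow> b * ln (real n) / real n \<le> 1 \<longrightarrow>
        (m1 > 0 \<or> m2 > 0) \<longrightarrow>
        real_of_int k \<le> (real m1 * a - real m2 * b) * ln (real n) / real n \<longrightarrow>
        (m2 = 0 \<longrightarrow> k > 0) \<longrightarrow>
        diff_prob a b n m1 m2 k
          \<le> real n powr (- g_rate (real m1 / real n) (real m2 / real n) a b (real_of_int k / ln (real n))))"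
proof (intro conjI allI impI)
  fix m1 m2 :: "nat \<Rightarrow> nat" and k :: "nat \<Rightarrow> int"
  assume \<rho>: "\<rho>1 \<ge> 0" "\<rho>2 \<ge> 0" "\<rho>1 > 0 \<or> \<rho>2 > 0"
    and m1: "(\<lambda>n. real (m1 n) - \<rho>1 * real n) \<in> o(\<lambda>n. real n)"
    and m2: "(\<lambda>n. real (m2 n) - \<rho>2 * real n) \<in> o(\<lambda>n. real n)"
    and k: "(\<lambda>n. real_of_int (k n) - \<alpha> * ln (real n)) \<in> o(\<lambda>n. ln (real n))"
    and \<alpha>: "\<alpha> \<le> a * \<rho>1 - b * \<rho>2" "\<rho>2 = 0 \<longrightarrow> \<alpha> > 0"
  have lim: "(\<lambda>n. m1 n / n) \<longlonglongrightarrow> \<rho>1" "(\<lambda>n. m2 n / n) \<longlonglongrightarrow> \<rho>2" "(\<lambda>n. k n / ln n) \<longlonglongrightarrow> \<alpha>"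
    using eventually_gt_at_top[of 0] eventually_ln_pos
    by (auto intro!: tendsto_div_of_smallo m1 m2 k elim: eventually_mono)
  obtain U where "U \<longlonglongrightarrow> - g_rate \<rho>1 \<rho>2 a b \<alpha>"
    and "\<forall>\<^sub>F n in sequentially. diff_prob a b n (m1 n) (m2 n) (k n) \<le> real n powr U n"
    using diff_prob_upper[OF assms \<rho> \<alpha>(1) _ lim] \<alpha>(2) by blast
  moreover obtain V where "V \<longlonglongrightarrow> - g_rate \<rho>1 \<rho>2 a b \<alpha>"
    and "\<forall>\<^sub>F n in sequentially. real n powr V n \<le> diff_prob a b n (m1 n) (m2 n) (k n)"
    using diff_prob_lower[OF assms \<rho> \<alpha>(1) _ lim] \<alpha>(2) by blast
  ultimately show "\<exists>\<epsilon>. \<epsilon> \<longlonglongrightarrow> 0 \<and>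
      (\<forall>\<^sub>F n in sequentially. diff_prob a b n (m1 n) (m2 n) (k n) = real n powr (- g_rate \<rho>1 \<rho>2 a b \<alpha> + \<epsilon> n))"
    by (intro powr_exponent_sandwich)
next
  fix n m1 m2 :: nat and k :: int
  assume "n \<ge> 1" "a * ln (real n) / real n \<le> 1" "b * ln (real n) / real n \<le> 1" "m1 > 0 \<or> m2 > 0"
    "real_of_int k \<le> (real m1 * a - real m2 * b) * ln (real n) / real n" "m2 = 0 \<longrightarrow> k > 0"
  then show "diff_prob a b n m1 m2 k
      \<le> real n powr (- g_rate (real m1 / real n) (real m2 / real n) a b (real_of_int k / ln (real n)))"
    using diff_prob_le_powr_g_rate[OF assms] by blast
qed

end
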